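(* Assume $|C|<m$ and let $\mathcal S_1=\{(w_1+uw_2,w_3)\in\mathcal R^m: w_1\in\Delta_A,\ w_2\in\Delta_B,\ w_3\in\Delta_C^c\}$. Put $\epsilon=2$ if $A\subseteq B$ and $\epsilon=1$ if $A\not\subseteq B$. Then $\mathscr C_{\mathcal S_1}$ is a linear code over $R$ with parameters $$\big(q^{|A|+|B|}(q^m-q^{|C|}),\ q^{m+|A|+|A\cup B|},\ \epsilon(q-1)q^{|A|+|B|-1}(q^m-q^{|C|})\big),$$ and its Lee weight distribution is: weight $0$ with frequency $1$; weight $(q-1)q^{|A|+|B|-1}(q^m-q^{|C|})$ with frequency $2(q^{|A\cup B|-|B|}-1)$; weight $2(q-1)q^{|A|+|B|-1}(q^m-q^{|C|})$ with frequency $q^{m+|A|+|A\cup B|}-2q^{m-|C|+|A\cup B|-|B|}+q^{m-|C|}$; weight $(q-1)q^{|A|+|B|-1}(2q^m-q^{|C|})$ with frequency $2(q^{|A\cup B|-|B|}-1)(q^{m-|C|}-1)$; weight $2(q-1)q^{m+|A|+|B|-1}$ with frequency $q^{m-|C|}-1$. Consequently $\mathscr C_{\mathcal S_1}$ is a $2$-weight code if $A\subseteq B$ and a $4$-weight code if $A\not\subseteq B$.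
   Context: Let $q$ be a prime power, $\mathbb F_q$ the field of order $q$, $m\ge 2$ an integer and $[m]=\{1,\dots,m\}$. For $v\in\mathbb F_q^m$, $\mathrm{supp}(v)=\{i:v_i\ne0\}$ and $wt_H$ is Hamming weight. For nonempty $P\subseteq[m]$, $\Delta_P=\{v\in\mathbb F_q^m:\mathrm{supp}(v)\subseteq P\}$, $\Delta_P^c=\mathbb F_q^m\setminus\Delta_P$, $\Delta_P^*=\Delta_P\setminus\{\mathbf 0\}$. $A,B,C$ denote nonempty subsets of $[m]$. Let $R=\mathbb F_q[u]/\langle u^2\rangle$ and $\mathcal R=R\times\mathbb F_q$; each element of $\mathcal R^m$ is uniquely $(d+ue,f)$ with $d,e,f\in\mathbb F_q^m$. Define $\langle(d_1+ue_1,f_1),(d_2+ue_2,f_2)\rangle=(d_1+ue_1)\cdot(d_2+ue_2)+u\,f_1\cdot f_2\in R$, where $x\cdot y=\sum_i x_iy_i$. For a nonempty $\mathcal D\subseteq\mathcal R^m$ listed in a fixed order, $\mathscr C_{\mathcal D}=\{(\langle r,s\rangle)_{s\in\mathcal D}: r\in\mathcal R^m\}\subseteq R^{|\mathcal D|}$, an $R$-submodule (linear code over $R$). The Gray map $\Phi:R^n\to\mathbb F_q^{2n}$ is $\Phi(d+ue)=(e,d+e)$ for $d,e\in\mathbb F_q^n$; the Lee weight is $wt_L(x)=wt_H(\Phi(x))$. A code over $R$ has parameters $(n,K,D)$ if it has length $n$, cardinality $K$ and minimum nonzero Lee weight $D$. A $t$-weight code has exactly $t$ distinct nonzero weights. If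 two listed weight values coincide, their frequencies are added. *)

theory Defs
  imports "HOL-Library.FuncSet"
begin

text \<open>Vectors in F_q^m are functions 'n => 'a, where the finite index type 'n
  plays the role of [m] (so m = CARD('n)) and 'a is the finite field F_q.
  An element d + u e of R = F_q[u]/(u^2) is represented by the pair (d, e).
  An element (d + u e, f) of the m-th power of R x F_q is represented by the triple (d, e, f).\<close>

definition supp :: "('n \<Rightarrow> 'a::zero) \<Rightarrow> 'n set" where
  "supp v = {i. v i \<noteq> 0}"

definition Delta :: "'n set \<Rightarrow> ('n \<Rightarrow> 'a::zero) set" where
  "Delta P = {v. supp v \<subseteq> P}"

definition dotp :: "('n::finite \<Rightarrow> 'a::comm_ring_1) \<Rightarrow> ('n \<Rightarrow> 'a) \<Rightarrow> 'a" where
  "dotp x y = (\<Sum>i\<in>UNIV. x i * y i)"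

definition rmul :: "'a::comm_ring_1 \<times> 'a \<Rightarrow> 'a \<times> 'a \<Rightarrow> 'a \<times> 'a" where
  "rmul x y = (fst x * fst y, fst x * snd y + snd x * fst y)"

definition radd :: "'a::comm_ring_1 \<times> 'a \<Rightarrow> 'a \<times> 'a \<Rightarrow> 'a \<times> 'a" where
  "radd x y = (fst x + fst y, snd x + snd y)"

type_synonym ('n, 'a) Rvec = "('n \<Rightarrow> 'a) \<times> ('n \<Rightarrow> 'a) \<times> ('n \<Rightarrow> 'a)"

text \<open>The bilinear form <(d1+ue1,f1),(d2+ue2,f2)> = (d1+ue1).(d2+ue2) + u f1.f2 in R.\<close>
definition rip :: "('n::finite, 'a::comm_ring_1) Rvec \<Rightarrow> ('n, 'a) Rvec \<Rightarrow> 'a \<times> 'a" where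
  "rip r s = (case r of (d1, e1, f1) \<Rightarrow> case s of (d2, e2, f2) \<Rightarrow>
      (dotp d1 d2, dotp d1 e2 + dotp e1 d2 + dotp f1 f2))"

text \<open>The code C_D: codewords are functions on the defining set D (the fixed listing
  order of D is irrelevant for length, size and Lee weights).\<close>
definition code :: "('n::finite, 'a::comm_ring_1) Rvec set \<Rightarrow> (('n, 'a) Rvec \<Rightarrow> 'a \<times> 'a) set" where
  "code D = (\<lambda>r. restrict (rip r) D) ` UNIV"

definition zero_word :: "('n, 'a::zero) Rvec set \<Rightarrow> (('n, 'a) Rvec \<Rightarrow> 'a \<times> 'a)" where
  "zero_word D = restrict (\<lambda>_. (0, 0)) D"

text \<open>Lee weight on R: wt_H of the Gray image (e, d + e).\<close>
definition leeR :: "'a::{zero,plus} \<times> 'a \<Rightarrow> nat" where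
  "leeR x = (if snd x \<noteq> 0 then 1 else 0) + (if fst x + snd x \<noteq> 0 then 1 else 0)"

definition leeW :: "('n, 'a::{zero,plus}) Rvec set \<Rightarrow> (('n, 'a) Rvec \<Rightarrow> 'a \<times> 'a) \<Rightarrow> nat" where
  "leeW D c = (\<Sum>s\<in>D. leeR (c s))"

definition min_lee :: "('n::finite, 'a::comm_ring_1) Rvec set \<Rightarrow> nat" where
  "min_lee D = Min {leeW D c | c. c \<in> code D \<and> c \<noteq> zero_word D}"

definition nonzero_weights :: "('n::finite, 'a::comm_ring_1) Rvec set \<Rightarrow> nat set" where
  "nonzero_weights D = {leeW D c | c. c \<in> code D \<and> c \<noteq> zero_word D}"

definition S1 :: "'n set \<Rightarrow> 'n set \<Rightarrow> 'n set \<Rightarrow> ('n, 'a::zero) Rvec set" where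
  "S1 A B C = {(w1, w2, w3). w1 \<in> Delta A \<and> w2 \<in> Delta B \<and> w3 \<notin> Delta C}"

end

(*
  The Lee weight of the codeword of r = (d + ue, f) counts, for each of its two Gray
  coordinates, the points s = (w1 + u w2, w3) of S1 where a linear form is nonzero, namely
  e.w1 + d.w2 + f.w3 and (d + e).w1 + d.w2 + f.w3.  Translating S1 by vectors of
  Delta_A x Delta_B x Delta_C shows that such a form takes all values equally often unless its
  coefficients vanish on A, B and C; then it only depends on w3 and is equidistributed on
  F_q^m.  So each Gray coordinate contributes W, V = (q-1) q^(m+a+b-1) or 0.  Since C is a
  proper subset, the codewords correspond bijectively to d in Delta_(A Un B), e in Delta_A and
  arbitrary f, and counting these parameters by vanishing pattern gives the distribution.
*)
theory Submission
  imports Defs "HOL-Library.Cardinality" "HOL-Library.Function_Algebras" "HOL-Library.Product_Plus"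
begin

section \<open>Coordinate subspaces\<close>

lemma mem_Delta_iff: "v \<in> Delta P \<longleftrightarrow> (\<forall>i. i \<notin> P \<longrightarrow> v i = 0)"
  by (auto simp: Delta_def supp_def)

lemma zero_mem_Delta [simp]: "0 \<in> Delta P"
  by (simp add: mem_Delta_iff)

lemma Delta_mono: "P \<subseteq> Q \<Longrightarrow> v \<in> Delta P \<Longrightarrow> v \<in> Delta Q"
  by (auto simp: Delta_def)

lemma add_mem_Delta: "x \<in> Delta P \<Longrightarrow> y \<in> Delta P \<Longrightarrow> x + y \<in> Delta (P :: 'n set)"
  for x y :: "'n \<Rightarrow> 'a::monoid_add"
  by (simp add: mem_Delta_iff)

lemma diff_mem_Delta: "x \<in> Delta P \<Longrightarrow> y \<in> Delta P \<Longrightarrow> x - y \<in> Delta (P :: 'n set)"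
  for x y :: "'n \<Rightarrow> 'a::group_add"
  by (simp add: mem_Delta_iff)

lemma uminus_mem_Delta: "x \<in> Delta P \<Longrightarrow> - x \<in> Delta (P :: 'n set)"
  for x :: "'n \<Rightarrow> 'a::group_add"
  by (simp add: mem_Delta_iff)

lemma add_notin_Delta: "x \<notin> Delta P \<Longrightarrow> y \<in> Delta P \<Longrightarrow> x + y \<notin> Delta (P :: 'n set)"
  for x y :: "'n \<Rightarrow> 'a::group_add"
  using diff_mem_Delta[of "x + y" P y] by auto

lemma diff_notin_Delta: "x \<notin> Delta P \<Longrightarrow> y \<in> Delta P \<Longrightarrow> x - y \<notin> Delta (P :: 'n set)"
  for x y :: "'n \<Rightarrow> 'a::group_add"
  using add_mem_Delta[of "x - y" P y] by auto

lemma card_Delta: "card (Delta P :: ('n::finite \<Rightarrow> 'a::{finite,zero}) set) = CARD('a) ^ card P"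
proof -
  have "bij_betw (\<lambda>v. restrict v P) (Delta P :: ('n \<Rightarrow> 'a) set) (PiE P (\<lambda>_. UNIV))"
    by (rule bij_betw_byWitness[where f' = "\<lambda>g i. if i \<in> P then g i else 0"])
       (auto simp: mem_Delta_iff fun_eq_iff PiE_def extensional_def)
  then show ?thesis
    by (simp add: bij_betw_same_card card_PiE)
qed

lemma card_Delta_minus_zero:
  "card (Delta P - {0} :: ('n::finite \<Rightarrow> 'a::{finite,zero}) set) = CARD('a) ^ card P - 1"
  by (simp add: card_Delta)

definition basis_vec :: "'n \<Rightarrow> 'a::zero \<Rightarrow> 'n \<Rightarrow> 'a" where
  "basis_vec k t = (\<lambda>i. if i = k then t else 0)"

lemma basis_vec_mem_Delta: "k \<in> P \<Longrightarrow> basis_vec k t \<in> Delta P"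
  by (simp add: basis_vec_def mem_Delta_iff)

lemma basis_vec_notin_Delta: "k \<notin> P \<Longrightarrow> t \<noteq> 0 \<Longrightarrow> basis_vec k t \<notin> Delta P"
  by (auto simp: basis_vec_def mem_Delta_iff)

lemma dotp_add_left: "dotp (x + y) w = dotp x w + dotp y w"
  by (simp add: dotp_def distrib_right sum.distrib)

lemma dotp_add_right: "dotp g (x + y) = dotp g x + dotp g y"
  by (simp add: dotp_def distrib_left sum.distrib)

lemma dotp_scale_left: "dotp (\<lambda>i. k * x i) w = k * dotp x w"
  by (simp add: dotp_def sum_distrib_left mult.assoc)

lemma dotp_zero_left [simp]: "dotp 0 w = 0"
  by (simp add: dotp_def)

lemma dotp_zero_right [simp]: "dotp g 0 = 0"
  by (simp add: dotp_def)

lemma dotp_basis_vec: "dotp g (basis_vec k t) = g k * t"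
  by (simp add: dotp_def basis_vec_def if_distrib cong: if_cong)

lemma dotp_cong_Delta:
  assumes "w \<in> Delta P" and "\<And>i. i \<in> P \<Longrightarrow> g i = g' i"
  shows "dotp g w = dotp g' w"
  unfolding dotp_def
proof (rule sum.cong)
  show "g i * w i = g' i * w i" for i
    using assms by (cases "i \<in> P") (auto simp: mem_Delta_iff)
qed simp

lemma dotp_eq_0_Delta: "w \<in> Delta P \<Longrightarrow> (\<And>i. i \<in> P \<Longrightarrow> g i = 0) \<Longrightarrow> dotp g w = 0"
  using dotp_cong_Delta[of w P g 0] by simp


section \<open>Counting by fibres and translations\<close>

lemma card_eq_sum_card_fibres:
  fixes f :: "'s \<Rightarrow> 'k::finite"
  assumes "finite S"
  shows "card S = (\<Sum>k\<in>UNIV. card {s\<in>S. f s = k})"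
  using sum.group[of S UNIV f "\<lambda>_. 1::nat"] assms by simp

lemma card_product_by_fibres:
  fixes \<kappa> :: "'x \<Rightarrow> 'k::finite" and \<tau> :: "'y \<Rightarrow> 't::finite"
  assumes "finite X" "finite Y"
  shows "card {p \<in> X \<times> Y. \<Phi> (\<kappa> (fst p)) (\<tau> (snd p))} =
    (\<Sum>k\<in>UNIV. \<Sum>t\<in>UNIV. if \<Phi> k t then card {x\<in>X. \<kappa> x = k} * card {y\<in>Y. \<tau> y = t} else 0)"
proof -
  let ?P = "{p \<in> X \<times> Y. \<Phi> (\<kappa> (fst p)) (\<tau> (snd p))}"
  have "card ?P = (\<Sum>kt\<in>UNIV. card {p \<in> ?P. (\<kappa> (fst p), \<tau> (snd p)) = kt})"
    by (rule card_eq_sum_card_fibres) (simp add: assms)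
  also have "\<dots> = (\<Sum>kt\<in>UNIV. if \<Phi> (fst kt) (snd kt)
      then card {x\<in>X. \<kappa> x = fst kt} * card {y\<in>Y. \<tau> y = snd kt} else 0)"
  proof (rule sum.cong[OF refl])
    fix kt :: "'k \<times> 't"
    have "{p \<in> ?P. (\<kappa> (fst p), \<tau> (snd p)) = kt} =
        (if \<Phi> (fst kt) (snd kt) then {x\<in>X. \<kappa> x = fst kt} \<times> {y\<in>Y. \<tau> y = snd kt} else {})"
      by (cases kt) auto
    then show "card {p \<in> ?P. (\<kappa> (fst p), \<tau> (snd p)) = kt} = (if \<Phi> (fst kt) (snd kt)
        then card {x\<in>X. \<kappa> x = fst kt} * card {y\<in>Y. \<tau> y = snd kt} else 0)"
      by (simp add: card_cartesian_product)
  qed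
  finally show ?thesis
    by (simp add: sum.cartesian_product split_def)
qed

lemma card_fibre_translation:
  fixes \<phi> :: "'s \<Rightarrow> 'a::ab_group_add"
  assumes T: "bij_betw T S S" and shift: "\<And>s. s \<in> S \<Longrightarrow> \<phi> (T s) = \<phi> s + t"
  shows "card {s\<in>S. \<phi> s = t} = card {s\<in>S. \<phi> s = 0}"
proof -
  have image: "T ` {s\<in>S. \<phi> s = 0} = {s\<in>S. \<phi> s = t}"
  proof
    show "T ` {s\<in>S. \<phi> s = 0} \<subseteq> {s\<in>S. \<phi> s = t}"
      using bij_betwE[OF T] shift by force
    show "{s\<in>S. \<phi> s = t} \<subseteq> T ` {s\<in>S. \<phi> s = 0}"
    proof
      fix s assume s: "s \<in> {s\<in>S. \<phi> s = t}"
      then obtain s' where s': "s' \<in> S" "s = T s'"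
        using bij_betw_imp_surj_on[OF T] by force
      with s shift[OF s'(1)] have "\<phi> s' = 0"
        by simp
      with s' show "s \<in> T ` {s\<in>S. \<phi> s = 0}"
        by blast
    qed
  qed
  have "inj_on T {s\<in>S. \<phi> s = 0}"
    using bij_betw_imp_inj_on[OF T] by (rule inj_on_subset) blast
  then show ?thesis
    using card_image image by fastforce
qed

lemma card_nonzero_translation_invariant:
  fixes \<phi> :: "'s \<Rightarrow> 'a::{finite,ab_group_add}"
  assumes "finite S"
    and translation: "\<And>t. \<exists>T. bij_betw T S S \<and> (\<forall>s\<in>S. \<phi> (T s) = \<phi> s + t)"
  shows "card {s\<in>S. \<phi> s \<noteq> 0} * CARD('a) = (CARD('a) - 1) * card S"
proof -
  define N where "N = card {s\<in>S. \<phi> s = 0}"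
  have fibre: "card {s\<in>S. \<phi> s = t} = N" for t
    using translation[of t] card_fibre_translation[of _ S \<phi> t] by (auto simp: N_def)
  have "card S = (\<Sum>t\<in>UNIV. card {s\<in>S. \<phi> s = t})"
    by (rule card_eq_sum_card_fibres) fact
  then have S: "card S = CARD('a) * N"
    by (simp add: fibre)
  have "{s\<in>S. \<phi> s \<noteq> 0} = S - {s\<in>S. \<phi> s = 0}"
    by blast
  then have "card {s\<in>S. \<phi> s \<noteq> 0} = card S - N"
    using \<open>finite S\<close> by (simp add: N_def card_Diff_subset)
  then show ?thesis
    by (simp add: S diff_mult_distrib diff_mult_distrib2 mult_ac)
qed

lemma bij_betw_translation:
  fixes v :: "'a::group_add"
  assumes "\<And>x. x \<in> S \<Longrightarrow> x + v \<in> S" and "\<And>x. x \<in> S \<Longrightarrow> x - v \<in> S"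
  shows "bij_betw (\<lambda>x. x + v) S S"
  by (rule bij_betw_byWitness[where f' = "\<lambda>x. x - v"]) (use assms in auto)


section \<open>Linear forms on the defining set\<close>

lemma S1_eq: "S1 A B C = Delta A \<times> Delta B \<times> - Delta C"
  by (auto simp: S1_def)

lemma card_S1:
  "card (S1 A B C :: ('n::finite, 'a::{finite,zero}) Rvec set) =
     CARD('a) ^ card A * CARD('a) ^ card B * (CARD('a) ^ CARD('n) - CARD('a) ^ card C)"
proof -
  have "card (- Delta C :: ('n \<Rightarrow> 'a) set) = CARD('n \<Rightarrow> 'a) - card (Delta C :: ('n \<Rightarrow> 'a) set)"
    by (simp add: Compl_eq_Diff_UNIV card_Diff_subset)
  then show ?thesis
    by (simp add: S1_eq card_cartesian_product card_Delta card_fun)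
qed

lemma S1_translation:
  fixes v :: "('n, 'a::ab_group_add) Rvec"
  assumes "v \<in> Delta A \<times> Delta B \<times> Delta C"
  shows "bij_betw (\<lambda>s. s + v) (S1 A B C) (S1 A B C)"
  by (rule bij_betw_translation)
     (use assms in \<open>auto simp: S1_eq add_mem_Delta diff_mem_Delta add_notin_Delta diff_notin_Delta\<close>)

definition lin_form ::
    "('n::finite \<Rightarrow> 'a::comm_ring_1) \<Rightarrow> ('n \<Rightarrow> 'a) \<Rightarrow> ('n \<Rightarrow> 'a) \<Rightarrow> ('n, 'a) Rvec \<Rightarrow> 'a"
  where "lin_form g1 g2 g3 = (\<lambda>(w1, w2, w3). dotp g1 w1 + dotp g2 w2 + dotp g3 w3)"

lemma lin_form_add: "lin_form g1 g2 g3 (s + v) = lin_form g1 g2 g3 s + lin_form g1 g2 g3 v"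
  by (cases s; cases v) (simp add: lin_form_def dotp_add_right algebra_simps)

lemma lin_form_surj_Delta:
  fixes g1 g2 g3 :: "'n::finite \<Rightarrow> 'a::field"
  assumes "(\<exists>i\<in>A. g1 i \<noteq> 0) \<or> (\<exists>i\<in>B. g2 i \<noteq> 0) \<or> (\<exists>i\<in>C. g3 i \<noteq> 0)"
  shows "\<exists>v \<in> Delta A \<times> Delta B \<times> Delta C. lin_form g1 g2 g3 v = t"
  using assms
proof (elim disjE bexE)
  fix i assume "i \<in> A" "g1 i \<noteq> 0"
  then show ?thesis
    by (intro bexI[of _ "(basis_vec i (t / g1 i), 0, 0)"])
       (simp_all add: lin_form_def dotp_basis_vec basis_vec_mem_Delta)
next
  fix i assume "i \<in> B" "g2 i \<noteq> 0"
  then show ?thesis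
    by (intro bexI[of _ "(0, basis_vec i (t / g2 i), 0)"])
       (simp_all add: lin_form_def dotp_basis_vec basis_vec_mem_Delta)
next
  fix i assume "i \<in> C" "g3 i \<noteq> 0"
  then show ?thesis
    by (intro bexI[of _ "(0, 0, basis_vec i (t / g3 i))"])
       (simp_all add: lin_form_def dotp_basis_vec basis_vec_mem_Delta)
qed

lemma card_nonzero_lin_form_S1:
  fixes g1 g2 g3 :: "'n::finite \<Rightarrow> 'a::{finite,field}"
  assumes "(\<exists>i\<in>A. g1 i \<noteq> 0) \<or> (\<exists>i\<in>B. g2 i \<noteq> 0) \<or> (\<exists>i\<in>C. g3 i \<noteq> 0)"
  shows "card {s \<in> S1 A B C. lin_form g1 g2 g3 s \<noteq> 0} * CARD('a) =
    (CARD('a) - 1) * card (S1 A B C :: ('n, 'a) Rvec set)"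
proof (rule card_nonzero_translation_invariant[where \<phi> = "lin_form g1 g2 g3"])
  fix t :: 'a
  obtain v where v: "v \<in> Delta A \<times> Delta B \<times> Delta C" "lin_form g1 g2 g3 v = t"
    using lin_form_surj_Delta[OF assms] by blast
  show "\<exists>T. bij_betw T (S1 A B C) (S1 A B C) \<and> (\<forall>s\<in>S1 A B C. lin_form g1 g2 g3 (T s) = lin_form g1 g2 g3 s + t)"
    using S1_translation[OF v(1)] v(2) by (auto simp: lin_form_add)
qed simp

lemma card_nonzero_dotp:
  fixes f :: "'n::finite \<Rightarrow> 'a::{finite,field}"
  assumes "f \<noteq> 0"
  shows "card {w. dotp f w \<noteq> 0} * CARD('a) = (CARD('a) - 1) * CARD('a) ^ CARD('n)"
proof -
  obtain i where i: "f i \<noteq> 0"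
    using assms by (auto simp: fun_eq_iff)
  have "card {w\<in>UNIV. dotp f w \<noteq> 0} * CARD('a) = (CARD('a) - 1) * card (UNIV :: ('n \<Rightarrow> 'a) set)"
  proof (rule card_nonzero_translation_invariant)
    fix t :: 'a
    have "bij_betw (\<lambda>w. w + basis_vec i (t / f i)) UNIV UNIV"
      by (rule bij_betw_translation) auto
    then show "\<exists>T. bij_betw T UNIV UNIV \<and> (\<forall>w\<in>UNIV. dotp f (T w) = dotp f w + t)"
      using i by (auto simp: dotp_add_right dotp_basis_vec)
  qed simp
  then show ?thesis
    by (simp add: card_fun)
qed

lemma nonzero_lin_form_S1_vanishing_eq:
  fixes g1 g2 g3 :: "'n::finite \<Rightarrow> 'a::comm_ring_1"
  assumes "\<forall>i\<in>A. g1 i = 0" "\<forall>i\<in>B. g2 i = 0" "\<forall>i\<in>C. g3 i = 0"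
  shows "{s \<in> S1 A B C. lin_form g1 g2 g3 s \<noteq> 0} = Delta A \<times> Delta B \<times> {w. dotp g3 w \<noteq> 0}"
  using assms dotp_eq_0_Delta[of _ A g1] dotp_eq_0_Delta[of _ B g2] dotp_eq_0_Delta[of _ C g3]
  by (fastforce simp: S1_eq lin_form_def)

datatype supp_class = Zero_vec | Meets | Misses

definition supp_class_of :: "'n set \<Rightarrow> ('n \<Rightarrow> 'a::zero) \<Rightarrow> supp_class" where
  "supp_class_of C f = (if f = 0 then Zero_vec else if supp f \<inter> C = {} then Misses else Meets)"

lemma UNIV_supp_class: "(UNIV :: supp_class set) = {Zero_vec, Meets, Misses}"
  using supp_class.exhaust by auto

instance supp_class :: finite
  by standard (simp add: UNIV_supp_class)

lemma card_supp_class_of: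
  fixes C :: "'n::finite set"
  shows "card {f :: 'n \<Rightarrow> 'a::{finite,zero}. supp_class_of C f = Zero_vec} = 1"
    and "card {f :: 'n \<Rightarrow> 'a. supp_class_of C f = Misses} = CARD('a) ^ card (- C) - 1"
    and "card {f :: 'n \<Rightarrow> 'a. supp_class_of C f = Meets} = CARD('a) ^ CARD('n) - CARD('a) ^ card (- C)"
proof -
  have "{f :: 'n \<Rightarrow> 'a. supp_class_of C f = Zero_vec} = {0}"
    by (auto simp: supp_class_of_def supp_def)
  then show "card {f :: 'n \<Rightarrow> 'a. supp_class_of C f = Zero_vec} = 1"
    by simp
  have "{f :: 'n \<Rightarrow> 'a. supp_class_of C f = Misses} = Delta (- C) - {0}"
    by (auto simp: supp_class_of_def Delta_def)
  then show "card {f :: 'n \<Rightarrow> 'a. supp_class_of C f = Misses} = CARD('a) ^ card (- C) - 1"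
    by (simp add: card_Delta_minus_zero)
  have "{f :: 'n \<Rightarrow> 'a. supp_class_of C f = Meets} = - Delta (- C)"
    by (auto simp: supp_class_of_def Delta_def supp_def)
  then show "card {f :: 'n \<Rightarrow> 'a. supp_class_of C f = Meets} = CARD('a) ^ CARD('n) - CARD('a) ^ card (- C)"
    by (simp add: Compl_eq_Diff_UNIV card_Diff_subset card_Delta card_fun)
qed

definition component_weight :: "nat \<Rightarrow> nat \<Rightarrow> bool \<Rightarrow> supp_class \<Rightarrow> nat" where
  "component_weight W V z t =
     (if z then (case t of Zero_vec \<Rightarrow> 0 | Misses \<Rightarrow> V | Meets \<Rightarrow> W) else W)"

lemma card_nonzero_lin_form_S1_eq:
  fixes A B C :: "'n::finite set" and g1 g2 g3 :: "'n \<Rightarrow> 'a::{finite,field}"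
  assumes "A \<noteq> {}"
  defines "W \<equiv> (CARD('a) - 1) * CARD('a) ^ (card A + card B - 1) * (CARD('a) ^ CARD('n) - CARD('a) ^ card C)"
    and "V \<equiv> (CARD('a) - 1) * CARD('a) ^ (CARD('n) + card A + card B - 1)"
  shows "card {s \<in> S1 A B C. lin_form g1 g2 g3 s \<noteq> 0} =
    component_weight W V ((\<forall>i\<in>A. g1 i = 0) \<and> (\<forall>i\<in>B. g2 i = 0)) (supp_class_of C g3)"
    (is "?N = component_weight W V ?z (supp_class_of C g3)")
proof -
  let ?q = "CARD('a)"
  have "?q > 0"
    by simp
  have "card A > 0"
    using assms(1) by (simp add: card_gt_0_iff)
  then have split_q: "?q ^ (k + card A + l) = ?q ^ (k + card A + l - 1) * ?q" for k l
    by (simp flip: power_Suc2)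
  consider (meets) "(\<exists>i\<in>A. g1 i \<noteq> 0) \<or> (\<exists>i\<in>B. g2 i \<noteq> 0) \<or> (\<exists>i\<in>C. g3 i \<noteq> 0)"
    | (zero) "\<forall>i\<in>A. g1 i = 0" "\<forall>i\<in>B. g2 i = 0" "g3 = 0"
    | (misses) "\<forall>i\<in>A. g1 i = 0" "\<forall>i\<in>B. g2 i = 0" "\<forall>i\<in>C. g3 i = 0" "g3 \<noteq> 0"
    by auto
  then show ?thesis
  proof cases
    case meets
    then have "component_weight W V ?z (supp_class_of C g3) = W"
      by (auto simp: component_weight_def supp_class_of_def supp_def)
    moreover have "?N * ?q = W * ?q"
      using card_nonzero_lin_form_S1[OF meets] split_q[of 0 "card B"]
      by (simp add: card_S1 W_def power_add mult_ac)
    ultimately show ?thesis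
      using \<open>?q > 0\<close> by simp
  next
    case zero
    then show ?thesis
      by (simp add: nonzero_lin_form_S1_vanishing_eq component_weight_def supp_class_of_def)
  next
    case misses
    have "?N * ?q = ?q ^ card A * ?q ^ card B * (card {w. dotp g3 w \<noteq> 0} * ?q)"
      using misses by (simp add: nonzero_lin_form_S1_vanishing_eq card_cartesian_product card_Delta)
    also have "\<dots> = (?q - 1) * ?q ^ (CARD('n) + card A + card B)"
      using card_nonzero_dotp[OF \<open>g3 \<noteq> 0\<close>] by (simp add: power_add mult_ac)
    also have "\<dots> = V * ?q"
      using split_q by (simp add: V_def)
    finally have "?N * ?q = V * ?q" .
    moreover have "component_weight W V ?z (supp_class_of C g3) = V"
      using misses by (auto simp: component_weight_def supp_class_of_def supp_def)
    ultimately show ?thesis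
      using \<open>?q > 0\<close> by simp
  qed
qed


section \<open>Codewords and Lee weights\<close>

definition codeword ::
    "('n::finite, 'a::comm_ring_1) Rvec set \<Rightarrow> ('n, 'a) Rvec \<Rightarrow> ('n, 'a) Rvec \<Rightarrow> 'a \<times> 'a"
  where "codeword D r = restrict (rip r) D"

lemma code_eq_range_codeword: "code D = range (codeword D)"
  by (simp add: code_def codeword_def)

lemma radd_rip: "radd (rip r s) (rip r' s) = rip (r + r') s"
  by (cases r; cases r'; cases s) (simp add: rip_def radd_def dotp_add_left)

lemma rmul_rip: "rmul (x, y) (rip (d, e, f) s) = rip (\<lambda>i. x * d i, \<lambda>i. x * e i + y * d i, \<lambda>i. x * f i) s"
  by (cases s)
     (simp add: rip_def rmul_def dotp_add_left[unfolded plus_fun_def] dotp_scale_left algebra_simps)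

lemma code_closed_radd:
  assumes "c \<in> code D" "c' \<in> code D"
  shows "restrict (\<lambda>s. radd (c s) (c' s)) D \<in> code D"
proof -
  obtain r r' where "c = codeword D r" "c' = codeword D r'"
    using assms by (auto simp: code_eq_range_codeword)
  then have "restrict (\<lambda>s. radd (c s) (c' s)) D = codeword D (r + r')"
    by (auto simp: codeword_def radd_rip)
  then show ?thesis
    by (simp add: code_eq_range_codeword)
qed

lemma code_closed_rmul:
  assumes "c \<in> code D"
  shows "restrict (\<lambda>s. rmul x (c s)) D \<in> code D"
proof -
  obtain d e f where "c = codeword D (d, e, f)"
    using assms by (auto simp: code_eq_range_codeword)
  moreover obtain x1 x2 where "x = (x1, x2)"
    by fastforce
  ultimately have "restrict (\<lambda>s. rmul x (c s)) D =
      codeword D (\<lambda>i. x1 * d i, \<lambda>i. x1 * e i + x2 * d i, \<lambda>i. x1 * f i)"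
    by (auto simp: codeword_def rmul_rip intro!: restrict_ext)
  then show ?thesis
    by (simp add: code_eq_range_codeword)
qed

lemma leeR_rip:
  "leeR (rip (d, e, f) s) =
     (if lin_form e d f s \<noteq> 0 then 1 else 0) + (if lin_form (d + e) d f s \<noteq> 0 then 1 else 0)"
  by (cases s) (simp add: rip_def leeR_def lin_form_def dotp_add_left algebra_simps)

lemma leeW_codeword:
  assumes "finite D"
  shows "leeW D (codeword D (d, e, f)) =
    card {s\<in>D. lin_form e d f s \<noteq> 0} + card {s\<in>D. lin_form (d + e) d f s \<noteq> 0}"
proof -
  have "card {s\<in>D. P s} = (\<Sum>s\<in>D. if P s then 1 else 0)" for P
    using assms by (simp add: sum.If_cases Int_def)
  then show ?thesis
    by (simp add: leeW_def codeword_def leeR_rip sum.distrib)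
qed

lemma leeW_eq_0_iff:
  fixes c :: "('n, 'a::monoid_add) Rvec \<Rightarrow> 'a \<times> 'a"
  assumes "finite D" and "c \<in> extensional D"
  shows "leeW D c = 0 \<longleftrightarrow> c = zero_word D"
proof -
  have "leeR x = 0 \<longleftrightarrow> x = (0, 0)" for x :: "'a \<times> 'a"
    by (cases x) (auto simp: leeR_def)
  then have "leeW D c = 0 \<longleftrightarrow> (\<forall>s\<in>D. c s = (0, 0))"
    using assms(1) by (simp add: leeW_def)
  also have "\<dots> \<longleftrightarrow> c = zero_word D"
    using assms(2) by (auto simp: zero_word_def intro: extensionalityI[where A = D])
  finally show ?thesis .
qed

lemma nonzero_weights_eq:
  fixes D :: "('n::finite, 'a::{finite,comm_ring_1}) Rvec set"
  shows "nonzero_weights D = {w. w \<noteq> 0 \<and> card {c \<in> code D. leeW D c = w} \<noteq> 0}"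
proof -
  have "c \<in> extensional D" if "c \<in> code D" for c
    using that by (auto simp: code_def)
  then have "c \<in> code D \<Longrightarrow> c \<noteq> zero_word D \<longleftrightarrow> leeW D c \<noteq> 0" for c
    using leeW_eq_0_iff[of D c] by simp
  then show ?thesis
    by (auto simp: nonzero_weights_def)
qed


section \<open>Parametrising the code\<close>

(* Only d on A Un B and e on A are seen by points of S1, as w1 is in Delta_A and w2 in Delta_B. *)
definition S1_params ::
    "'n set \<Rightarrow> 'n set \<Rightarrow> ((('n \<Rightarrow> 'a::zero) \<times> ('n \<Rightarrow> 'a)) \<times> ('n \<Rightarrow> 'a)) set"
  where "S1_params A B = (Delta (A \<union> B) \<times> Delta A) \<times> UNIV"

lemma code_S1_eq_image:
  fixes A B C :: "'n::finite set"
  shows "code (S1 A B C :: ('n, 'a::comm_ring_1) Rvec set) = (\<lambda>((d, e), f). codeword (S1 A B C) (d, e, f)) ` S1_params A B"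
proof
  show "(\<lambda>((d, e), f). codeword (S1 A B C) (d, e, f)) ` S1_params A B \<subseteq> code (S1 A B C :: ('n, 'a) Rvec set)"
    by (auto simp: code_eq_range_codeword)
  show "code (S1 A B C :: ('n, 'a) Rvec set) \<subseteq> (\<lambda>((d, e), f). codeword (S1 A B C) (d, e, f)) ` S1_params A B"
  proof
    fix c :: "('n, 'a) Rvec \<Rightarrow> 'a \<times> 'a"
    assume "c \<in> code (S1 A B C)"
    then obtain d e f where c: "c = codeword (S1 A B C) (d, e, f)"
      by (auto simp: code_eq_range_codeword)
    define d' where "d' = (\<lambda>i. if i \<in> A \<union> B then d i else 0)"
    define e' where "e' = (\<lambda>i. if i \<in> A then e i else 0)"
    have "codeword (S1 A B C) (d', e', f) = c"
      unfolding c codeword_def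
    proof (rule restrict_ext)
      fix s :: "('n, 'a) Rvec"
      assume "s \<in> S1 A B C"
      then obtain w1 w2 w3 where s: "s = (w1, w2, w3)" "w1 \<in> Delta A" "w2 \<in> Delta B"
        by (auto simp: S1_eq)
      show "rip (d', e', f) s = rip (d, e, f) s"
        using s dotp_cong_Delta[of w1 A d' d] dotp_cong_Delta[of w2 B d' d] dotp_cong_Delta[of w1 A e' e]
        by (simp add: rip_def d'_def e'_def)
    qed
    moreover have "((d', e'), f) \<in> S1_params A B"
      by (simp add: S1_params_def d'_def e'_def mem_Delta_iff)
    ultimately show "c \<in> (\<lambda>((d, e), f). codeword (S1 A B C :: ('n, 'a) Rvec set) (d, e, f)) ` S1_params A B"
      by force
  qed
qed

(* Evaluate at (0, 0, u_j), (0, 0, u_j + u_k), (u_i, 0, u_j) and (0, u_i, u_j), where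
   u_i = basis_vec i 1 and j is outside C. *)
lemma rip_agree_on_S1:
  fixes d e f d' e' f' :: "'n::finite \<Rightarrow> 'a::field"
  assumes "C \<noteq> UNIV"
    and agree: "\<And>w1 w2 w3. w1 \<in> Delta A \<Longrightarrow> w2 \<in> Delta B \<Longrightarrow> w3 \<notin> Delta C \<Longrightarrow>
      rip (d, e, f) (w1, w2, w3) = rip (d', e', f') (w1, w2, w3)"
  shows "f = f'" and "i \<in> A \<union> B \<Longrightarrow> d i = d' i" and "i \<in> A \<Longrightarrow> e i = e' i"
proof -
  obtain j where j: "j \<notin> C"
    using assms by auto
  let ?u = "basis_vec j (1::'a)"
  have u: "?u \<notin> Delta C"
    using j by (simp add: basis_vec_notin_Delta)
  have fj: "f j = f' j"
    using agree[OF _ _ u, of 0 0] by (simp add: rip_def dotp_basis_vec)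
  have "f k = f' k" for k
  proof (cases "k = j")
    case False
    then have "?u + basis_vec k 1 \<notin> Delta C"
      using j by (auto simp: basis_vec_def mem_Delta_iff)
    then show ?thesis
      using agree[of 0 0 "?u + basis_vec k 1"] fj by (simp add: rip_def dotp_add_right dotp_basis_vec)
  qed (use fj in simp)
  then show f: "f = f'" ..
  have "d i = d' i \<and> e i = e' i" if "i \<in> A" for i
    using agree[of "basis_vec i 1" 0 ?u] basis_vec_mem_Delta[OF that, of "1::'a"] u f
    by (simp add: rip_def dotp_basis_vec)
  moreover have "d i = d' i" if "i \<in> B" for i
    using agree[of 0 "basis_vec i 1" ?u] basis_vec_mem_Delta[OF that, of "1::'a"] u f
    by (simp add: rip_def dotp_basis_vec)
  ultimately show "i \<in> A \<union> B \<Longrightarrow> d i = d' i" and "i \<in> A \<Longrightarrow> e i = e' i"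
    by blast+
qed

lemma inj_on_codeword_S1:
  fixes A B C :: "'n::finite set"
  assumes "C \<noteq> UNIV"
  shows "inj_on (\<lambda>((d, e), f). codeword (S1 A B C) (d, e, f))
    (S1_params A B :: ((('n \<Rightarrow> 'a::field) \<times> ('n \<Rightarrow> 'a)) \<times> ('n \<Rightarrow> 'a)) set)"
proof (rule inj_onI, clarsimp simp: S1_params_def)
  fix d e f d' e' f' :: "'n \<Rightarrow> 'a"
  assume d: "d \<in> Delta (A \<union> B)" "d' \<in> Delta (A \<union> B)" and e: "e \<in> Delta A" "e' \<in> Delta A"
    and eq: "codeword (S1 A B C) (d, e, f) = codeword (S1 A B C) (d', e', f')"
  have "rip (d, e, f) (w1, w2, w3) = rip (d', e', f') (w1, w2, w3)"
    if "w1 \<in> Delta A" "w2 \<in> Delta B" "w3 \<notin> Delta C" for w1 w2 w3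
    using fun_cong[OF eq, of "(w1, w2, w3)"] that by (simp add: codeword_def S1_eq)
  note agree = rip_agree_on_S1[OF assms this]
  have "d = d'"
  proof
    show "d i = d' i" for i
    proof (cases "i \<in> A \<union> B")
      case False
      then show ?thesis
        using d by (simp add: mem_Delta_iff)
    qed (rule agree(2))
  qed
  moreover have "e = e'"
  proof
    show "e i = e' i" for i
    proof (cases "i \<in> A")
      case False
      then show ?thesis
        using e by (simp add: mem_Delta_iff)
    qed (rule agree(3))
  qed
  ultimately show "d = d' \<and> e = e' \<and> f = f'"
    using agree(1) by blast
qed

lemma card_code_S1:
  fixes A B C :: "'n::finite set"
  assumes "C \<noteq> UNIV"
  shows "card (code (S1 A B C :: ('n, 'a::{finite,field}) Rvec set)) =
    CARD('a) ^ (CARD('n) + card A + card (A \<union> B))"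
proof -
  have "card (code (S1 A B C :: ('n, 'a) Rvec set)) = card (S1_params A B :: ((('n \<Rightarrow> 'a) \<times> _) \<times> _) set)"
    using card_image[OF inj_on_codeword_S1[OF assms]] by (simp add: code_S1_eq_image)
  then show ?thesis
    by (simp add: S1_params_def card_cartesian_product card_Delta card_fun power_add)
qed


section \<open>Vanishing patterns\<close>

(* By leeR_rip the Gray coordinates of the codeword of (d, e, f) are the forms lin_form e d f and
   lin_form (d + e) d f; each component records whether the w1- and w2-coefficients of one of
   them vanish on A and B. *)
definition gray_vanishing ::
    "'n set \<Rightarrow> 'n set \<Rightarrow> ('n \<Rightarrow> 'a::{zero,plus}) \<times> ('n \<Rightarrow> 'a) \<Rightarrow> bool \<times> bool"
  where "gray_vanishing A B = (\<lambda>(d, e).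
    ((\<forall>i\<in>A. e i = 0) \<and> (\<forall>i\<in>B. d i = 0), (\<forall>i\<in>A. d i + e i = 0) \<and> (\<forall>i\<in>B. d i = 0)))"

definition pair_weight :: "nat \<Rightarrow> nat \<Rightarrow> bool \<times> bool \<Rightarrow> supp_class \<Rightarrow> nat"
  where "pair_weight W V = (\<lambda>(z1, z2) t. component_weight W V z1 t + component_weight W V z2 t)"

lemma leeW_codeword_S1:
  fixes A B C :: "'n::finite set" and d e f :: "'n \<Rightarrow> 'a::{finite,field}"
  assumes "A \<noteq> {}"
  defines "W \<equiv> (CARD('a) - 1) * CARD('a) ^ (card A + card B - 1) * (CARD('a) ^ CARD('n) - CARD('a) ^ card C)"
    and "V \<equiv> (CARD('a) - 1) * CARD('a) ^ (CARD('n) + card A + card B - 1)"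
  shows "leeW (S1 A B C) (codeword (S1 A B C) (d, e, f)) =
    pair_weight W V (gray_vanishing A B (d, e)) (supp_class_of C f)"
proof -
  have e_part: "card {s \<in> S1 A B C. lin_form e d f s \<noteq> 0} =
      component_weight W V ((\<forall>i\<in>A. e i = 0) \<and> (\<forall>i\<in>B. d i = 0)) (supp_class_of C f)"
    unfolding W_def V_def by (rule card_nonzero_lin_form_S1_eq[OF assms(1)])
  have de_part: "card {s \<in> S1 A B C. lin_form (d + e) d f s \<noteq> 0} =
      component_weight W V ((\<forall>i\<in>A. (d + e) i = 0) \<and> (\<forall>i\<in>B. d i = 0)) (supp_class_of C f)"
    unfolding W_def V_def by (rule card_nonzero_lin_form_S1_eq[OF assms(1)])
  have "finite (S1 A B C :: ('n, 'a) Rvec set)"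
    by simp
  then show ?thesis
    by (simp only: leeW_codeword e_part de_part pair_weight_def gray_vanishing_def prod.case plus_fun_apply)
qed

lemma gray_vanishing_eq:
  fixes d e :: "'n \<Rightarrow> 'a::group_add"
  assumes d: "d \<in> Delta (A \<union> B)" and e: "e \<in> Delta A"
  shows "gray_vanishing A B (d, e) = (d \<in> Delta (A - B) \<and> e = 0, d \<in> Delta (A - B) \<and> e = - d)"
proof -
  have "(\<forall>i\<in>A. e i = 0) \<longleftrightarrow> e = 0"
    using e by (auto simp: mem_Delta_iff fun_eq_iff)
  moreover have "(\<forall>i\<in>B. d i = 0) \<longleftrightarrow> d \<in> Delta (A - B)"
    using d by (auto simp: mem_Delta_iff)
  moreover have "(\<forall>i\<in>A. d i + e i = 0) \<longleftrightarrow> e = - d" if "d \<in> Delta (A - B)"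
  proof
    assume sum0: "\<forall>i\<in>A. d i + e i = 0"
    show "e = - d"
    proof
      show "e i = (- d) i" for i
      proof (cases "i \<in> A")
        case True
        then show ?thesis
          using sum0 minus_unique[of "d i" "e i"] by simp
      qed (use that e in \<open>simp add: mem_Delta_iff\<close>)
    qed
  qed simp
  ultimately show ?thesis
    by (auto simp: gray_vanishing_def)
qed

lemma gray_vanishing_True_True:
  "{x \<in> Delta (A \<union> B) \<times> Delta A. gray_vanishing A B x = (True, True)} = {(0, 0 :: 'n \<Rightarrow> 'a::group_add)}"
  by (auto simp: gray_vanishing_eq)

lemma gray_vanishing_True_False:
  "{x \<in> Delta (A \<union> B) \<times> Delta A. gray_vanishing A B x = (True, False)} =
    (Delta (A - B) - {0}) \<times> {0 :: 'n \<Rightarrow> 'a::group_add}"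
proof -
  have "d \<in> Delta (A - B) \<Longrightarrow> d \<in> Delta (A \<union> B)" for d :: "'n \<Rightarrow> 'a"
    by (rule Delta_mono[of "A - B"]) auto
  then show ?thesis
    by (auto simp: gray_vanishing_eq)
qed

lemma gray_vanishing_False_True:
  "{x \<in> Delta (A \<union> B) \<times> Delta A. gray_vanishing A B x = (False, True)} =
    (\<lambda>d. (d, - d)) ` (Delta (A - B) - {0 :: 'n \<Rightarrow> 'a::group_add})"
proof (intro set_eqI iffI)
  fix x :: "('n \<Rightarrow> 'a) \<times> ('n \<Rightarrow> 'a)"
  assume x: "x \<in> {x \<in> Delta (A \<union> B) \<times> Delta A. gray_vanishing A B x = (False, True)}"
  obtain d e where de: "x = (d, e)"
    by fastforce
  with x have "d \<in> Delta (A - B)" "e = - d" "e \<noteq> 0"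
    by (auto simp: gray_vanishing_eq)
  with de show "x \<in> (\<lambda>d. (d, - d)) ` (Delta (A - B) - {0})"
    by auto
next
  fix x
  assume "x \<in> (\<lambda>d. (d, - d)) ` (Delta (A - B) - {0 :: 'n \<Rightarrow> 'a})"
  then obtain d where d: "x = (d, - d)" "d \<in> Delta (A - B)" "d \<noteq> 0"
    by blast
  moreover have "d \<in> Delta (A \<union> B)" "- d \<in> Delta A"
    by (intro uminus_mem_Delta Delta_mono[OF _ d(2)]; auto)+
  ultimately show "x \<in> {x \<in> Delta (A \<union> B) \<times> Delta A. gray_vanishing A B x = (False, True)}"
    by (simp add: gray_vanishing_eq)
qed

lemma UNIV_bool_pair: "(UNIV :: (bool \<times> bool) set) = {(True, True), (True, False), (False, True), (False, False)}"
  by auto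

lemma card_gray_vanishing:
  fixes A B :: "'n::finite set"
  defines "X \<equiv> Delta (A \<union> B) \<times> Delta A :: (('n \<Rightarrow> 'a::{finite,group_add}) \<times> ('n \<Rightarrow> 'a)) set"
  shows "card {x \<in> X. gray_vanishing A B x = (True, True)} = 1"
    and "card {x \<in> X. gray_vanishing A B x = (True, False)} = CARD('a) ^ card (A - B) - 1"
    and "card {x \<in> X. gray_vanishing A B x = (False, True)} = CARD('a) ^ card (A - B) - 1"
    and "int (card {x \<in> X. gray_vanishing A B x = (False, False)}) =
      int CARD('a) ^ (card (A \<union> B) + card A) - 2 * int CARD('a) ^ card (A - B) + 1"
proof -
  show TT: "card {x \<in> X. gray_vanishing A B x = (True, True)} = 1"
    by (simp add: X_def gray_vanishing_True_True)
  show TF: "card {x \<in> X. gray_vanishing A B x = (True, False)} = CARD('a) ^ card (A - B) - 1"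
    by (simp add: X_def gray_vanishing_True_False card_cartesian_product card_Delta_minus_zero)
  have "inj_on (\<lambda>d. (d, - d)) (Delta (A - B) - {0 :: 'n \<Rightarrow> 'a})"
    by (rule inj_onI) simp
  then show FT: "card {x \<in> X. gray_vanishing A B x = (False, True)} = CARD('a) ^ card (A - B) - 1"
    by (simp add: X_def gray_vanishing_False_True card_image card_Delta_minus_zero)
  have "int (card X) = (\<Sum>k\<in>UNIV. int (card {x \<in> X. gray_vanishing A B x = k}))"
    by (subst card_eq_sum_card_fibres[of X]) (simp_all add: X_def)
  also have "\<dots> = 2 * int CARD('a) ^ card (A - B) - 1 + int (card {x \<in> X. gray_vanishing A B x = (False, False)})"
    by (simp add: UNIV_bool_pair TT TF FT of_nat_diff)
  finally show "int (card {x \<in> X. gray_vanishing A B x = (False, False)}) =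
      int CARD('a) ^ (card (A \<union> B) + card A) - 2 * int CARD('a) ^ card (A - B) + 1"
    by (simp add: X_def card_cartesian_product card_Delta power_add)
qed

lemma card_weight_S1:
  fixes A B C :: "'n::finite set" and D :: "('n, 'a::{finite,field}) Rvec set"
  assumes "A \<noteq> {}" "C \<noteq> UNIV"
  defines "D \<equiv> S1 A B C"
    and "W \<equiv> (CARD('a) - 1) * CARD('a) ^ (card A + card B - 1) * (CARD('a) ^ CARD('n) - CARD('a) ^ card C)"
    and "V \<equiv> (CARD('a) - 1) * CARD('a) ^ (CARD('n) + card A + card B - 1)"
  shows "card {c \<in> code D. leeW D c = w} =
    (\<Sum>k\<in>UNIV. \<Sum>t\<in>UNIV. if pair_weight W V k t = w then
       card {x \<in> Delta (A \<union> B) \<times> Delta A :: (('n \<Rightarrow> 'a) \<times> ('n \<Rightarrow> 'a)) set.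
         gray_vanishing A B x = k} *
       card {f :: 'n \<Rightarrow> 'a. supp_class_of C f = t} else 0)"
proof -
  let ?\<phi> = "\<lambda>((d, e), f). codeword D (d, e, f)"
  have inj: "inj_on ?\<phi> (S1_params A B)"
    unfolding D_def by (rule inj_on_codeword_S1[OF assms(2)])
  have "{c \<in> code D. leeW D c = w} = ?\<phi> ` {p \<in> S1_params A B. leeW D (?\<phi> p) = w}"
    unfolding D_def code_S1_eq_image by blast
  then have "card {c \<in> code D. leeW D c = w} = card {p \<in> S1_params A B. leeW D (?\<phi> p) = w}"
    using card_image[OF inj_on_subset[OF inj]] by simp
  also have "\<dots> = card
      {p \<in> (Delta (A \<union> B) \<times> Delta A :: (('n \<Rightarrow> 'a) \<times> ('n \<Rightarrow> 'a)) set) \<times> (UNIV :: ('n \<Rightarrow> 'a) set).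
        pair_weight W V (gray_vanishing A B (fst p)) (supp_class_of C (snd p)) = w}"
  proof -
    have "leeW D (?\<phi> ((d, e), f)) = pair_weight W V (gray_vanishing A B (d, e)) (supp_class_of C f)" for d e f
      unfolding D_def W_def V_def by (simp add: leeW_codeword_S1[OF assms(1)])
    then show ?thesis
      by (simp add: S1_params_def split_def)
  qed
  also have "\<dots> = (\<Sum>k\<in>UNIV. \<Sum>t\<in>UNIV. if pair_weight W V k t = w then
       card {x \<in> Delta (A \<union> B) \<times> Delta A :: (('n \<Rightarrow> 'a) \<times> ('n \<Rightarrow> 'a)) set.
         gray_vanishing A B x = k} *
       card {f :: 'n \<Rightarrow> 'a. supp_class_of C f = t} else 0)"
    by (subst card_product_by_fibres) (simp_all cong: if_cong)
  finally show ?thesis .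
qed


section \<open>The weight distribution\<close>

lemma card_field_ge_2: "CARD('a::{finite,field}) \<ge> 2"
proof -
  have "card {0::'a, 1} \<le> CARD('a)" by (rule card_mono) auto
  then show ?thesis by simp
qed

lemma weight_bounds_S1:
  fixes A B C :: "'n::finite set" and q m a b c W V :: nat
  defines "q \<equiv> CARD('a::{finite,field})" and "m \<equiv> CARD('n)" and "a \<equiv> card A" and "b \<equiv> card B"
    and "c \<equiv> card C"
    and "W \<equiv> (q - 1) * q ^ (a + b - 1) * (q ^ m - q ^ c)"
    and "V \<equiv> (q - 1) * q ^ (m + a + b - 1)"
  assumes "A \<noteq> {}" and "C \<noteq> UNIV"
  shows "0 < W" and "W < V" and "W + V = (q - 1) * q ^ (a + b - 1) * (2 * q ^ m - q ^ c)"
proof -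
  have "c < m"
    using \<open>C \<noteq> UNIV\<close> psubset_card_mono[of UNIV C] by (auto simp: c_def m_def)
  have "q \<ge> 2"
    using card_field_ge_2 by (simp add: q_def)
  then have "q ^ c < q ^ m"
    using \<open>c < m\<close> by (simp add: power_strict_increasing)
  with \<open>q \<ge> 2\<close> show "0 < W"
    by (simp add: W_def)
  have "a > 0"
    using \<open>A \<noteq> {}\<close> by (simp add: a_def card_gt_0_iff)
  then have V: "V = (q - 1) * q ^ (a + b - 1) * q ^ m"
    by (simp add: V_def power_add[symmetric] add.commute add.left_commute)
  show "W < V"
    using \<open>q \<ge> 2\<close> \<open>q ^ c < q ^ m\<close> by (simp add: W_def V)
  have "2 * q ^ m - q ^ c = (q ^ m - q ^ c) + q ^ m"
    using \<open>q ^ c < q ^ m\<close> by simp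
  then show "W + V = (q - 1) * q ^ (a + b - 1) * (2 * q ^ m - q ^ c)"
    by (simp add: W_def V distrib_left)
qed

lemma weight_distribution_S1:
  fixes A B C :: "'n::finite set" and D :: "('n, 'a::{finite,field}) Rvec set"
    and q m a b c ab W :: nat
  defines "q \<equiv> CARD('a)" and "m \<equiv> CARD('n)" and "a \<equiv> card A" and "b \<equiv> card B"
    and "c \<equiv> card C" and "ab \<equiv> card (A \<union> B)" and "D \<equiv> S1 A B C"
    and "W \<equiv> (q - 1) * q ^ (a + b - 1) * (q ^ m - q ^ c)"
  assumes "A \<noteq> {}" and "C \<noteq> UNIV"
  shows "int (card {x \<in> code D. leeW D x = w}) =
    sum_list (map (\<lambda>(w', f). if w' = w then f else 0)
      [(0, 1),
       (W, 2 * (int q ^ (ab - b) - 1)),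
       (2 * W, int q ^ (m + a + ab) - 2 * int q ^ (m - c + ab - b) + int q ^ (m - c)),
       ((q - 1) * q ^ (a + b - 1) * (2 * q ^ m - q ^ c),
          2 * (int q ^ (ab - b) - 1) * (int q ^ (m - c) - 1)),
       (2 * (q - 1) * q ^ (m + a + b - 1), int q ^ (m - c) - 1)])"
proof -
  let ?cK = "\<lambda>k. card {x \<in> Delta (A \<union> B) \<times> Delta A :: (('n \<Rightarrow> 'a) \<times> ('n \<Rightarrow> 'a)) set.
    gray_vanishing A B x = k}"
  let ?cT = "\<lambda>t. card {f :: 'n \<Rightarrow> 'a. supp_class_of C f = t}"
  define V where "V = (q - 1) * q ^ (m + a + b - 1)"
  have "0 < W" "W < V" and W_plus_V: "W + V = (q - 1) * q ^ (a + b - 1) * (2 * q ^ m - q ^ c)"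
    using weight_bounds_S1[OF \<open>A \<noteq> {}\<close> \<open>C \<noteq> UNIV\<close>, where 'a = 'a and B = B]
    unfolding W_def V_def q_def m_def a_def b_def c_def by blast+
  have two_V: "2 * V = 2 * (q - 1) * q ^ (m + a + b - 1)"
    by (simp add: V_def)
  have card_weight: "int (card {x \<in> code D. leeW D x = w}) =
    (\<Sum>k\<in>UNIV. \<Sum>t\<in>UNIV. if pair_weight W V k t = w then int (?cK k) * int (?cT t) else 0)"
    using card_weight_S1[OF \<open>A \<noteq> {}\<close> \<open>C \<noteq> UNIV\<close>, where B = B and w = w and 'a = 'a,
        folded q_def m_def a_def b_def c_def, folded W_def V_def D_def]
    by (simp add: if_distrib[of int] cong: if_cong)
  have "A - B = (A \<union> B) - B"
    by blast
  then have "card (A - B) = ab - b"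
    by (simp add: ab_def b_def card_Diff_subset)
  then have cK: "int (?cK (True, True)) = 1"
      "int (?cK (True, False)) = int q ^ (ab - b) - 1"
      "int (?cK (False, True)) = int q ^ (ab - b) - 1"
      "int (?cK (False, False)) = int q ^ (ab + a) - 2 * int q ^ (ab - b) + 1"
    using card_gray_vanishing[of A B, where 'a = 'a]
    by (simp_all add: of_nat_diff q_def ab_def a_def)
  have "card (- C) = m - c"
    by (simp add: m_def c_def Compl_eq_Diff_UNIV card_Diff_subset)
  moreover have "q ^ (m - c) \<le> q ^ m"
    by (simp add: q_def power_increasing)
  ultimately have cT: "int (?cT Zero_vec) = 1"
      "int (?cT Misses) = int q ^ (m - c) - 1"
      "int (?cT Meets) = int q ^ m - int q ^ (m - c)"
    using card_supp_class_of[of C, where 'a = 'a]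
    by (simp_all add: of_nat_diff q_def m_def)
  have "c < m"
    using \<open>C \<noteq> UNIV\<close> psubset_card_mono[of UNIV C] by (auto simp: c_def m_def)
  then have "int q ^ (m - c + ab - b) = int q ^ (m - c) * int q ^ (ab - b)"
    by (simp add: ab_def b_def card_mono flip: power_add)
  moreover have "int q ^ (m + a + ab) = int q ^ m * int q ^ (ab + a)"
    by (simp add: power_add mult_ac)
  ultimately show ?thesis
    unfolding card_weight W_plus_V[symmetric] two_V[symmetric]
    using \<open>0 < W\<close> \<open>W < V\<close>
    by (simp add: UNIV_bool_pair UNIV_supp_class pair_weight_def component_weight_def cK cT algebra_simps)
qed

lemma frequencies_pos_S1:
  fixes A B C :: "'n::finite set" and q m a b c ab :: nat
  defines "q \<equiv> CARD('a::{finite,field})" and "m \<equiv> CARD('n)" and "a \<equiv> card A" and "b \<equiv> card B"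
    and "c \<equiv> card C" and "ab \<equiv> card (A \<union> B)"
  assumes "A \<noteq> {}" and "C \<noteq> UNIV"
  shows "int q ^ (ab - b) = 1 \<longleftrightarrow> A \<subseteq> B"
    and "int q ^ (m - c) \<ge> 2"
    and "int q ^ (m + a + ab) - 2 * int q ^ (m - c + ab - b) + int q ^ (m - c) > 0"
proof -
  have "c < m"
    using \<open>C \<noteq> UNIV\<close> psubset_card_mono[of UNIV C] by (auto simp: c_def m_def)
  have "q \<ge> 2"
    using card_field_ge_2 by (simp add: q_def)
  have "b \<le> ab"
    by (simp add: b_def ab_def card_mono)
  have "int q ^ (ab - b) = 1 \<longleftrightarrow> ab - b = 0"
    using \<open>q \<ge> 2\<close> power_inject_exp[of "int q" "ab - b" 0] by simp
  also have "\<dots> \<longleftrightarrow> B = A \<union> B"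
    using \<open>b \<le> ab\<close> card_subset_eq[of "A \<union> B" B] by (auto simp: ab_def b_def)
  also have "\<dots> \<longleftrightarrow> A \<subseteq> B"
    by blast
  finally show "int q ^ (ab - b) = 1 \<longleftrightarrow> A \<subseteq> B" .
  have q2: "2 \<le> int q"
    using \<open>q \<ge> 2\<close> by simp
  also have "\<dots> \<le> int q ^ (m - c)"
    using \<open>q \<ge> 2\<close> \<open>c < m\<close> by (intro self_le_power) auto
  finally show Q2: "int q ^ (m - c) \<ge> 2" .
  have "int q \<le> int q ^ (c + b + a)"
    using \<open>q \<ge> 2\<close> \<open>A \<noteq> {}\<close> by (intro self_le_power) (auto simp: a_def card_gt_0_iff)
  with q2 have "2 \<le> int q ^ (c + b + a)"
    by linarith
  then have "int q ^ (m - c + ab - b) * 2 \<le> int q ^ (m - c + ab - b) * int q ^ (c + b + a)"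
    by (rule mult_left_mono) simp
  also have "\<dots> = int q ^ (m + a + ab)"
    using \<open>c < m\<close> \<open>b \<le> ab\<close> by (simp add: add_ac flip: power_add)
  finally show "int q ^ (m + a + ab) - 2 * int q ^ (m - c + ab - b) + int q ^ (m - c) > 0"
    using Q2 by linarith
qed

lemma nonzero_weights_S1:
  fixes A B C :: "'n::finite set" and D :: "('n, 'a::{finite,field}) Rvec set"
    and q m a b c ab W V :: nat
  defines "q \<equiv> CARD('a)" and "m \<equiv> CARD('n)" and "a \<equiv> card A" and "b \<equiv> card B"
    and "c \<equiv> card C" and "ab \<equiv> card (A \<union> B)" and "D \<equiv> S1 A B C"
    and "W \<equiv> (q - 1) * q ^ (a + b - 1) * (q ^ m - q ^ c)"
    and "V \<equiv> (q - 1) * q ^ (m + a + b - 1)"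
  assumes "A \<noteq> {}" and "C \<noteq> UNIV"
  shows "nonzero_weights D = (if A \<subseteq> B then {2 * W, 2 * V} else {W, 2 * W, W + V, 2 * V})"
proof -
  note defs = q_def m_def a_def b_def c_def ab_def
  have "0 < W" "W < V" and W_plus_V: "W + V = (q - 1) * q ^ (a + b - 1) * (2 * q ^ m - q ^ c)"
    using weight_bounds_S1[OF \<open>A \<noteq> {}\<close> \<open>C \<noteq> UNIV\<close>, where 'a = 'a and B = B]
    unfolding defs W_def V_def by blast+
  have two_V: "2 * V = 2 * (q - 1) * q ^ (m + a + b - 1)"
    by (simp add: V_def)
  have "card {x \<in> code D. leeW D x = w} \<noteq> 0 \<longleftrightarrow>
    sum_list (map (\<lambda>(w', f). if w' = w then f else 0)
      [(0, 1),
       (W, 2 * (int q ^ (ab - b) - 1)),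
       (2 * W, int q ^ (m + a + ab) - 2 * int q ^ (m - c + ab - b) + int q ^ (m - c)),
       (W + V, 2 * (int q ^ (ab - b) - 1) * (int q ^ (m - c) - 1)),
       (2 * V, int q ^ (m - c) - 1)]) \<noteq> 0" for w
    using weight_distribution_S1[OF \<open>A \<noteq> {}\<close> \<open>C \<noteq> UNIV\<close>, where 'a = 'a and B = B and w = w]
    unfolding W_plus_V two_V unfolding defs D_def W_def by linarith
  moreover have "int q ^ (ab - b) = 1 \<longleftrightarrow> A \<subseteq> B" "int q ^ (m - c) \<ge> 2"
    "int q ^ (m + a + ab) - 2 * int q ^ (m - c + ab - b) + int q ^ (m - c) > 0"
    using frequencies_pos_S1[OF \<open>A \<noteq> {}\<close> \<open>C \<noteq> UNIV\<close>, where 'a = 'a] unfolding defs by blast+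
  ultimately show ?thesis
    unfolding nonzero_weights_eq using \<open>0 < W\<close> \<open>W < V\<close> by auto
qed

theorem mainTheorem1:
  fixes A B C :: "'n::finite set"
    and q m a b c ab W :: nat and eps :: nat
    and D :: "('n, 'a::{finite,field}) Rvec set"
  defines "q \<equiv> card (UNIV :: 'a set)" and "m \<equiv> card (UNIV :: 'n set)"
    and "a \<equiv> card A" and "b \<equiv> card B" and "c \<equiv> card C" and "ab \<equiv> card (A \<union> B)"
    and "D \<equiv> S1 A B C"
    and "eps \<equiv> (if A \<subseteq> B then 2 else 1)"
    and "W \<equiv> (q - 1) * q ^ (a + b - 1) * (q ^ m - q ^ c)"
  assumes "m \<ge> 2" and "A \<noteq> {}" and "B \<noteq> {}" and "C \<noteq> {}" and "c < m"
  shows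
    "((\<forall>x \<in> code D. \<forall>y \<in> code D. restrict (\<lambda>s. radd (x s) (y s)) D \<in> code D)
     \<and> (\<forall>x \<in> code D. \<forall>r::'a \<times> 'a. restrict (\<lambda>s. rmul r (x s)) D \<in> code D))
   \<and> card D = q ^ (a + b) * (q ^ m - q ^ c)
   \<and> card (code D) = q ^ (m + a + ab)
   \<and> min_lee D = eps * W
   \<and> (\<forall>w::nat. int (card {x \<in> code D. leeW D x = w}) =
        sum_list (map (\<lambda>(w', f). if w' = w then f else 0)
          [(0, 1),
           (W, 2 * (int q ^ (ab - b) - 1)),
           (2 * W, int q ^ (m + a + ab) - 2 * int q ^ (m - c + ab - b) + int q ^ (m - c)),
           ((q - 1) * q ^ (a + b - 1) * (2 * q ^ m - q ^ c),
              2 * (int q ^ (ab - b) - 1) * (int q ^ (m - c) - 1)),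
           (2 * (q - 1) * q ^ (m + a + b - 1), int q ^ (m - c) - 1)]))
   \<and> card (nonzero_weights D) = (if A \<subseteq> B then 2 else 4)"
proof -
  have "C \<noteq> UNIV"
    using \<open>c < m\<close> by (auto simp: c_def m_def)
  note defs = q_def m_def a_def b_def c_def ab_def D_def
  define V where "V = (q - 1) * q ^ (m + a + b - 1)"
  have "0 < W" "W < V"
    using weight_bounds_S1[OF \<open>A \<noteq> {}\<close> \<open>C \<noteq> UNIV\<close>, where 'a = 'a and B = B]
    unfolding defs W_def V_def by blast+
  have nonzero: "nonzero_weights D = (if A \<subseteq> B then {2 * W, 2 * V} else {W, 2 * W, W + V, 2 * V})"
    using nonzero_weights_S1[OF \<open>A \<noteq> {}\<close> \<open>C \<noteq> UNIV\<close>, where B = B]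
    unfolding defs W_def V_def .
  have "min_lee D = Min (nonzero_weights D)"
    by (simp add: min_lee_def nonzero_weights_def)
  with \<open>0 < W\<close> \<open>W < V\<close> have "min_lee D = eps * W"
    by (simp add: nonzero eps_def)
  moreover have "card (nonzero_weights D) = (if A \<subseteq> B then 2 else 4)"
    using \<open>0 < W\<close> \<open>W < V\<close> by (simp add: nonzero)
  moreover have "card D = q ^ (a + b) * (q ^ m - q ^ c)"
    by (simp add: defs card_S1 power_add)
  moreover have "card (code D) = q ^ (m + a + ab)"
    using card_code_S1[OF \<open>C \<noteq> UNIV\<close>] by (simp add: defs)
  moreover note weight_distribution_S1[OF \<open>A \<noteq> {}\<close> \<open>C \<noteq> UNIV\<close>, where 'a = 'a and B = B,
    folded defs, folded W_def]
  ultimately show ?thesis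
    by (blast intro: code_closed_radd code_closed_rmul)
qed

end
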